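(* Let $\mathcal{A}$ and $\mathcal{B}$ be sharp qubit observables, with a priori probabilities $\eta$ for $\mathcal{A}$ and $1-\eta$ for $\mathcal{B}$, where $\eta\in[0,1]$, and let $P\in[0,1]$. The following are equivalent: (i) there is a unit vector $\psi\in\mathbb{C}^2\otimes\mathbb{C}^2$ such that $\langle\psi|\mathcal{B}_1\otimes\mathcal{B}_1+\mathcal{B}_2\otimes\mathcal{B}_2|\psi\rangle=0$ and $\eta\langle\psi|\mathcal{A}_1\otimes\mathcal{A}_1+\mathcal{A}_2\otimes\mathcal{A}_2|\psi\rangle=P$ (i.e. the result "same outcomes" leads to the conclusion that the apparatus is $\mathcal{A}$, with success probability $P$); (ii) there is a unit vector $\psi'\in\mathbb{C}^2\otimes\mathbb{C}^2$ such that $\langle\psi'|\mathcal{B}_1\otimes\mathcal{B}_2+\mathcal{B}_2\otimes\mathcal{B}_1|\psi'\rangle=0$ and $\eta\langle\psi'|\mathcal{A}_1\otimes\mathcal{A}_2+\mathcal{A}_2\otimes\mathcal{A}_1|\psi'\rangle=P$ (i.e. the result "different outcomes" leads to the conclusion that the apparatus is $\mathcal{A}$, with success probability $P$).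
   Context: A sharp qubit observable is given by a unit vector $\vec a\in\mathbb{R}^3$ and has two outcomes with effects $\mathcal{A}_1=\frac12(I+\vec a\cdot\vec\sigma)$, $\mathcal{A}_2=\frac12(I-\vec a\cdot\vec\sigma)$ on $\mathbb{C}^2$, where $\vec\sigma=(\sigma_x,\sigma_y,\sigma_z)$ are the Pauli matrices; similarly $\mathcal{B}_{1,2}=\frac12(I\pm\vec b\cdot\vec\sigma)$ with $\vec b$ a unit vector. In a two-shot experiment, the unknown apparatus (either $\mathcal{A}$ or $\mathcal{B}$, labels of outcomes unknown) is applied to each half of a probe state on $\mathbb{C}^2\otimes\mathbb{C}^2$, and one only observes whether the two outcomes are the same or different. *)

theory Defs
  imports "HOL-Analysis.Analysis"
begin

text \<open>Qubit space C^2 is complex^2 (index type 2 with elements 0,1);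
  the two-qubit space C^2 \<otimes> C^2 is complex^(2 \<times> 2).\<close>

type_synonym qmat = "complex^2^2"
type_synonym qqvec = "complex^(2 \<times> 2)"
type_synonym qqmat = "complex^(2 \<times> 2)^(2 \<times> 2)"

definition sigma_x :: qmat where
  "sigma_x = (\<chi> i j. if i \<noteq> j then 1 else 0)"

definition sigma_y :: qmat where
  "sigma_y = (\<chi> i j. if i = 0 \<and> j = 1 then - \<i> else if i = 1 \<and> j = 0 then \<i> else 0)"

definition sigma_z :: qmat where
  "sigma_z = (\<chi> i j. if i = j then (if i = 0 then 1 else -1) else 0)"

definition dot_sigma :: "real^3 \<Rightarrow> qmat" where
  "dot_sigma a = a$1 *\<^sub>R sigma_x + a$2 *\<^sub>R sigma_y + a$3 *\<^sub>R sigma_z"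

text \<open>Effects of the sharp observable given by unit vector a: outcome 1 and outcome 2.\<close>
definition eff1 :: "real^3 \<Rightarrow> qmat" where
  "eff1 a = (1/2 :: real) *\<^sub>R (mat 1 + dot_sigma a)"

definition eff2 :: "real^3 \<Rightarrow> qmat" where
  "eff2 a = (1/2 :: real) *\<^sub>R (mat 1 - dot_sigma a)"

definition tens :: "qmat \<Rightarrow> qmat \<Rightarrow> qqmat" where
  "tens A B = (\<chi> p q. A $ fst p $ fst q * B $ snd p $ snd q)"

definition expval :: "qqmat \<Rightarrow> qqvec \<Rightarrow> complex" where
  "expval M \<psi> = (\<Sum>i\<in>UNIV. cnj (\<psi> $ i) * (M *v \<psi>) $ i)"

end

theory Submission
  imports Defs
begin

text \<open>Pick a unit vector \<open>n\<close> orthogonal to both \<open>a\<close> and \<open>b\<close>. By the Pauli relations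
  \<open>\<sigma>\<^sub>n\<sigma>\<^sub>a + \<sigma>\<^sub>a\<sigma>\<^sub>n = 2 (n\<cdot>a) I\<close>, the Hermitian involution \<open>\<sigma>\<^sub>n = n\<cdot>\<sigma>\<close> anticommutes with \<open>\<sigma>\<^sub>a\<close> and
  \<open>\<sigma>\<^sub>b\<close>, so conjugation by it exchanges the two effects of either observable. Hence the
  unitary \<open>I \<otimes> \<sigma>\<^sub>n\<close>, applied to the probe state, turns "same outcomes" into "different
  outcomes" for \<open>\<A>\<close> and \<open>\<B>\<close> simultaneously, and it maps witnesses of (i) to witnesses
  of (ii) and back.\<close>

lemma matrix_add_rdistrib: "((A :: 'a::semiring_1^'n^'m) + B) ** C = A ** C + B ** C"
  by (simp add: matrix_matrix_mult_def vec_eq_iff distrib_right sum.distrib)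

lemma matrix_diff_ldistrib: "(A :: 'a::ring_1^'n^'m) ** (B - C) = A ** B - A ** C"
  by (simp add: matrix_matrix_mult_def vec_eq_iff right_diff_distrib sum_subtractf)

lemma matrix_diff_rdistrib: "((A :: 'a::ring_1^'n^'m) - B) ** C = A ** C - B ** C"
  by (simp add: matrix_matrix_mult_def vec_eq_iff left_diff_distrib sum_subtractf)

lemma exists_unit_orthogonal_pair:
  fixes a b :: "'a::euclidean_space"
  assumes "DIM('a) \<ge> 3"
  obtains n where "norm n = 1" "inner n a = 0" "inner n b = 0"
proof -
  have "dim {a, b} \<le> card {a, b}" by (rule dim_le_card') simp
  also have "\<dots> \<le> 2" by (simp add: card_insert_le_m1)
  finally have "dim {a, b} < DIM('a)" using assms by simp
  then obtain x where "x \<noteq> 0" and x: "\<And>y. y \<in> span {a, b} \<Longrightarrow> orthogonal x y"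
    using orthogonal_to_subspace_exists by blast
  then have "norm (x /\<^sub>R norm x) = 1" "inner (x /\<^sub>R norm x) a = 0" "inner (x /\<^sub>R norm x) b = 0"
    by (auto simp: orthogonal_def span_base)
  then show ?thesis by (rule that)
qed

definition cnj_transpose :: "complex^'n^'m \<Rightarrow> complex^'m^'n" where
  "cnj_transpose W = (\<chi> i j. cnj (W $ j $ i))"

lemma sum_cnj_matrix_vector_mult:
  fixes W :: "complex^'n^'m"
  shows "(\<Sum>i\<in>UNIV. cnj ((W *v x) $ i) * y $ i) = (\<Sum>k\<in>UNIV. cnj (x $ k) * (cnj_transpose W *v y) $ k)"
proof -
  have "(\<Sum>i\<in>UNIV. cnj ((W *v x) $ i) * y $ i) = (\<Sum>i\<in>UNIV. \<Sum>k\<in>UNIV. cnj (W$i$k) * cnj (x$k) * y$i)"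
    by (simp add: matrix_vector_mult_def sum_distrib_right)
  also have "\<dots> = (\<Sum>k\<in>UNIV. \<Sum>i\<in>UNIV. cnj (x$k) * (cnj (W$i$k) * y$i))"
    by (subst sum.swap) (simp add: mult_ac)
  also have "\<dots> = (\<Sum>k\<in>UNIV. cnj (x $ k) * (cnj_transpose W *v y) $ k)"
    by (simp add: matrix_vector_mult_def cnj_transpose_def sum_distrib_left)
  finally show ?thesis .
qed

lemma norm_power2_complex_vec: "complex_of_real ((norm (x :: complex^'n))\<^sup>2) = (\<Sum>i\<in>UNIV. cnj (x$i) * x$i)"
proof -
  have "(norm x)\<^sup>2 = (\<Sum>i\<in>UNIV. (norm (x$i))\<^sup>2)"
    unfolding norm_vec_def L2_set_def by (simp add: sum_nonneg)
  then have "complex_of_real ((norm x)\<^sup>2) = (\<Sum>i\<in>UNIV. complex_of_real ((norm (x$i))\<^sup>2))"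
    by (simp only: of_real_sum)
  then show ?thesis
    by (simp only: complex_norm_square) (simp add: mult.commute)
qed

lemma norm_unitary_matrix_vector_mult:
  fixes W :: "complex^'n^'n"
  assumes "cnj_transpose W ** W = mat 1"
  shows "norm (W *v x) = norm x"
proof -
  have "complex_of_real ((norm (W *v x))\<^sup>2) = complex_of_real ((norm x)\<^sup>2)"
    unfolding norm_power2_complex_vec sum_cnj_matrix_vector_mult
    by (simp add: matrix_vector_mul_assoc assms)
  then have "(norm (W *v x))\<^sup>2 = (norm x)\<^sup>2"
    by (simp only: of_real_eq_iff)
  then show ?thesis
    by (simp add: power2_eq_iff_nonneg)
qed

lemma expval_matrix_vector_mult: "expval M (W *v \<psi>) = expval (cnj_transpose W ** M ** W) \<psi>"
  unfolding expval_def sum_cnj_matrix_vector_mult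
  by (simp add: matrix_vector_mul_assoc matrix_mul_assoc)

lemma UNIV_2_zero_one: "(UNIV :: 2 set) = {0, 1}"
proof -
  have "(2 :: 2) = 0" by simp
  then have "x = 0 \<or> x = 1" for x :: 2
    using exhaust_2[of x] by metis
  then show ?thesis by auto
qed

lemma UNIV_2_times_2: "(UNIV :: (2 \<times> 2) set) = {(0, 0), (0, 1), (1, 0), (1, 1)}"
  by (auto simp: UNIV_2_zero_one simp flip: UNIV_Times_UNIV)

lemma qmat_eq_iff:
  "(A :: qmat) = B \<longleftrightarrow> A$0$0 = B$0$0 \<and> A$0$1 = B$0$1 \<and> A$1$0 = B$1$0 \<and> A$1$1 = B$1$1"
  by (auto simp: vec_eq_iff UNIV_2_zero_one ball_UNIV[symmetric])

lemma qmat_mult_entry: "((A :: qmat) ** B) $ i $ j = A$i$0 * B$0$j + A$i$1 * B$1$j"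
  by (simp add: matrix_matrix_mult_def UNIV_2_zero_one)

lemma dot_sigma_entries:
  "dot_sigma a $ 0 $ 0 = complex_of_real (a$3)"
  "dot_sigma a $ 0 $ 1 = complex_of_real (a$1) - \<i> * complex_of_real (a$2)"
  "dot_sigma a $ 1 $ 0 = complex_of_real (a$1) + \<i> * complex_of_real (a$2)"
  "dot_sigma a $ 1 $ 1 = - complex_of_real (a$3)"
  by (simp_all add: dot_sigma_def sigma_x_def sigma_y_def sigma_z_def; simp add: scaleR_conv_of_real)+

lemma dot_sigma_anticommutator:
  "dot_sigma a ** dot_sigma b + dot_sigma b ** dot_sigma a = (2 * inner a b) *\<^sub>R mat 1"
  unfolding qmat_eq_iff vector_add_component qmat_mult_entry dot_sigma_entries
  by (simp add: inner_vec_def sum_3 mat_def complex_eq_iff algebra_simps)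

lemma dot_sigma_square: "dot_sigma a ** dot_sigma a = (norm a)\<^sup>2 *\<^sub>R mat 1"
proof -
  have "2 *\<^sub>R (dot_sigma a ** dot_sigma a) = 2 *\<^sub>R ((norm a)\<^sup>2 *\<^sub>R mat 1)"
    using dot_sigma_anticommutator[of a a] by (simp add: scaleR_2 power2_norm_eq_inner)
  then show ?thesis by (simp only: scaleR_cancel_left) simp
qed

lemma dot_sigma_conj_orthogonal:
  assumes "norm n = 1" "inner n a = 0"
  shows "dot_sigma n ** dot_sigma a ** dot_sigma n = - dot_sigma a"
proof -
  have anti: "dot_sigma a ** dot_sigma n = - (dot_sigma n ** dot_sigma a)"
    using dot_sigma_anticommutator[of n a] assms(2) by (simp add: add_eq_0_iff2 add.commute)
  have "dot_sigma n ** dot_sigma a ** dot_sigma n = dot_sigma n ** (dot_sigma a ** dot_sigma n)"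
    by (simp add: matrix_mul_assoc)
  also have "\<dots> = - (dot_sigma n ** dot_sigma n ** dot_sigma a)"
    using matrix_diff_ldistrib[of "dot_sigma n" 0 "dot_sigma n ** dot_sigma a"]
    by (simp add: anti matrix_mul_assoc)
  also have "\<dots> = - dot_sigma a"
    using dot_sigma_square[of n] assms(1) by simp
  finally show ?thesis .
qed

lemma dot_sigma_conj_effects:
  assumes "norm n = 1" "inner n a = 0"
  shows "dot_sigma n ** eff1 a ** dot_sigma n = eff2 a"
    and "dot_sigma n ** eff2 a ** dot_sigma n = eff1 a"
  unfolding eff1_def eff2_def matrix_scalar_ac scalar_matrix_assoc[symmetric]
    matrix_add_ldistrib matrix_add_rdistrib matrix_diff_ldistrib matrix_diff_rdistrib
    dot_sigma_conj_orthogonal[OF assms] matrix_mul_rid dot_sigma_square assms(1)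
  by (simp_all add: scaleR_right_diff_distrib scaleR_add_right)

lemma cnj_transpose_dot_sigma: "cnj_transpose (dot_sigma a) = dot_sigma a"
  by (auto simp: vec_eq_iff cnj_transpose_def UNIV_2_zero_one ball_UNIV[symmetric] dot_sigma_entries)

lemma tens_mult: "tens A B ** tens C D = tens (A ** C) (B ** D)"
  by (simp add: vec_eq_iff matrix_matrix_mult_def tens_def UNIV_2_zero_one UNIV_2_times_2 algebra_simps)

lemma tens_mat_1: "tens (mat 1) (mat 1) = mat 1"
  by (simp add: vec_eq_iff tens_def mat_def prod_eq_iff)

lemma cnj_transpose_tens: "cnj_transpose (tens A B) = tens (cnj_transpose A) (cnj_transpose B)"
  by (simp add: vec_eq_iff cnj_transpose_def tens_def)

lemma cnj_transpose_mat_1: "cnj_transpose (mat 1) = mat 1"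
  by (simp add: vec_eq_iff cnj_transpose_def mat_def)

lemma expval_id_tens_dot_sigma_swap:
  assumes "norm n = 1" "inner n a = 0"
  shows "expval (tens (eff1 a) (eff1 a) + tens (eff2 a) (eff2 a)) (tens (mat 1) (dot_sigma n) *v \<psi>)
       = expval (tens (eff1 a) (eff2 a) + tens (eff2 a) (eff1 a)) \<psi>"
    and "expval (tens (eff1 a) (eff2 a) + tens (eff2 a) (eff1 a)) (tens (mat 1) (dot_sigma n) *v \<psi>)
       = expval (tens (eff1 a) (eff1 a) + tens (eff2 a) (eff2 a)) \<psi>"
  unfolding expval_matrix_vector_mult cnj_transpose_tens cnj_transpose_mat_1 cnj_transpose_dot_sigma
    matrix_add_ldistrib matrix_add_rdistrib tens_mult dot_sigma_conj_effects[OF assms]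
  by (simp_all add: matrix_mul_assoc add.commute)

theorem proposition4:
  fixes a b :: "real^3" and \<eta> P :: real
  assumes "norm a = 1" and "norm b = 1"
    and "0 \<le> \<eta>" and "\<eta> \<le> 1" and "0 \<le> P" and "P \<le> 1"
  shows "(\<exists>\<psi> :: qqvec. norm \<psi> = 1
            \<and> expval (tens (eff1 b) (eff1 b) + tens (eff2 b) (eff2 b)) \<psi> = 0
            \<and> complex_of_real \<eta> * expval (tens (eff1 a) (eff1 a) + tens (eff2 a) (eff2 a)) \<psi>
                = complex_of_real P)
     \<longleftrightarrow>
         (\<exists>\<psi>' :: qqvec. norm \<psi>' = 1
            \<and> expval (tens (eff1 b) (eff2 b) + tens (eff2 b) (eff1 b)) \<psi>' = 0
            \<and> complex_of_real \<eta> * expval (tens (eff1 a) (eff2 a) + tens (eff2 a) (eff1 a)) \<psi>'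
                = complex_of_real P)"
proof -
  obtain n :: "real^3" where n: "norm n = 1" "inner n a = 0" "inner n b = 0"
    using exists_unit_orthogonal_pair[of a b] by auto
  define W where "W = tens (mat 1) (dot_sigma n)"
  have "cnj_transpose W ** W = mat 1"
    using n(1) by (simp add: W_def cnj_transpose_tens cnj_transpose_mat_1 cnj_transpose_dot_sigma
        tens_mult dot_sigma_square tens_mat_1)
  then have norm_W: "norm (W *v \<psi>) = norm \<psi>" for \<psi>
    by (rule norm_unitary_matrix_vector_mult)
  note swap_a = expval_id_tens_dot_sigma_swap[OF n(1,2), folded W_def]
    and swap_b = expval_id_tens_dot_sigma_swap[OF n(1,3), folded W_def]
  show ?thesis
    by (intro iffI; elim exE conjE; rule exI[where x = "W *v _"]) (auto simp: norm_W swap_a swap_b)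
qed

end
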